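(* Let $m\ge2$ be an integer and let $A$ be a left brace with $A^{(3)}=A^{m+1}=\{0\}$. Let $a\in A$, and define $a_1=a$ and $a_{j+1}=a*a_j$ for $j\ge1$ (so $a_j=0$ for $j>m$). Then for every integer $n$ (possibly negative or zero) and every $1\le j\le m$, \[(na)*a_j=\sum_{k=1}^{m-j}\binom{n}{k}a_{k+j}.\]
   Context: A left brace $(A,+,\cdot)$ is a set $A$ with two binary operations such that $(A,+)$ is an abelian group, $(A,\cdot)$ is a group, and $a(b+c)=ab-a+ac$ for all $a,b,c\in A$. In a left brace, $a*b=-a+ab-b$. For subsets $L,M\subseteq A$, $L*M$ is the subgroup of $(A,+)$ generated by $\{l*m\mid l\in L,m\in M\}$. Set $A^{(1)}=A$, $A^{(r+1)}=A^{(r)}*A$, and $A^1=A$, $A^{r+1}=A*A^r$ for $r\ge1$. Here $na$ is the $n$-fold multiple of $a$ in $(A,+)$. Generalised binomial coefficients: for $n\in\mathbb{Z}$ and integer $k\ge0$, $\binom{n}{0}=1$ and $\binom{n}{k}=\frac{n(n-1)\cdots(n-k+1)}{k!}$ for $k>0$. *)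

theory Defs
  imports Main
begin

text \<open>A left brace carried by a type 'a: the abelian group (A,+) is the
  ab_group_add structure of 'a, and mul is the multiplication.\<close>

definition is_group_op :: "('a \<Rightarrow> 'a \<Rightarrow> 'a) \<Rightarrow> bool" where
  "is_group_op mul \<longleftrightarrow>
     (\<forall>x y z. mul (mul x y) z = mul x (mul y z)) \<and>
     (\<exists>e. (\<forall>x. mul e x = x \<and> mul x e = x) \<and> (\<forall>x. \<exists>y. mul x y = e \<and> mul y x = e))"

definition left_brace :: "('a::ab_group_add \<Rightarrow> 'a \<Rightarrow> 'a) \<Rightarrow> bool" where
  "left_brace mul \<longleftrightarrow> is_group_op mul \<and>
     (\<forall>a b c. mul a (b + c) = mul a b - a + mul a c)"

definition bstar :: "('a::ab_group_add \<Rightarrow> 'a \<Rightarrow> 'a) \<Rightarrow> 'a \<Rightarrow> 'a \<Rightarrow> 'a" where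
  "bstar mul a b = - a + mul a b - b"

definition add_span :: "'a::ab_group_add set \<Rightarrow> 'a set" where
  "add_span S = \<Inter>{H. 0 \<in> H \<and> (\<forall>x\<in>H. \<forall>y\<in>H. x - y \<in> H) \<and> S \<subseteq> H}"

definition star_set :: "('a::ab_group_add \<Rightarrow> 'a \<Rightarrow> 'a) \<Rightarrow> 'a set \<Rightarrow> 'a set \<Rightarrow> 'a set" where
  "star_set mul L M = add_span {bstar mul l m | l m. l \<in> L \<and> m \<in> M}"

text \<open>rser mul r = A^{(r+1)}, lser mul r = A^{r+1}.\<close>
fun rser :: "('a::ab_group_add \<Rightarrow> 'a \<Rightarrow> 'a) \<Rightarrow> nat \<Rightarrow> 'a set" where
  "rser mul 0 = UNIV"
| "rser mul (Suc r) = star_set mul (rser mul r) UNIV"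

fun lser :: "('a::ab_group_add \<Rightarrow> 'a \<Rightarrow> 'a) \<Rightarrow> nat \<Rightarrow> 'a set" where
  "lser mul 0 = UNIV"
| "lser mul (Suc r) = star_set mul UNIV (lser mul r)"

definition zsmul :: "int \<Rightarrow> 'a::ab_group_add \<Rightarrow> 'a" where
  "zsmul n a = (if 0 \<le> n then (\<Sum>i<nat n. a) else - (\<Sum>i<nat (- n). a))"

text \<open>Generalised binomial coefficient n(n-1)...(n-k+1)/k! (exact division).\<close>
definition gbinom :: "int \<Rightarrow> nat \<Rightarrow> int" where
  "gbinom n k = (\<Prod>i<k. n - int i) div int (fact k)"

definition aseq :: "('a::ab_group_add \<Rightarrow> 'a \<Rightarrow> 'a) \<Rightarrow> 'a \<Rightarrow> nat \<Rightarrow> 'a" where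
  "aseq mul a j = ((bstar mul a) ^^ (j - 1)) a"

end

theory Submission
  imports Defs Complex_Main
begin

text \<open>Write \<open>\<lambda>\<^sub>x(y) = -x + xy\<close>, so that \<open>x * y = \<lambda>\<^sub>x(y) - y\<close>, each \<open>\<lambda>\<^sub>x\<close> is additive and
  \<open>\<lambda>\<^sub>x\<^sub>y = \<lambda>\<^sub>x \<circ> \<lambda>\<^sub>y\<close>. If \<open>x'\<close> is the inverse of \<open>x\<close>, then \<open>x + y = x \<lambda>\<^sub>x\<^sub>'(y)\<close> and
  \<open>\<lambda>\<^sub>x\<^sub>'(y) - y = x' * y \<in> A * A\<close>; as \<open>A\<^sup>(\<^sup>3\<^sup>) = 0\<close> makes \<open>\<lambda>\<^sub>l\<close> the identity for \<open>l \<in> A * A\<close>, this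
  gives \<open>\<lambda>\<^sub>x\<^sub>+\<^sub>y = \<lambda>\<^sub>x \<circ> \<lambda>\<^sub>y\<close>. Hence, with \<open>b\<^sub>i = a\<^sub>i\<^sub>+\<^sub>1\<close>, both \<open>\<lambda>\<^sub>n\<^sub>a(b\<^sub>i)\<close> and
  \<open>\<Sum>\<^sub>k\<^sub><\<^sub>m C(n,k) b\<^sub>k\<^sub>+\<^sub>i\<close> satisfy the Pascal recurrence \<open>f(n+1,i) = f(n,i+1) + f(n,i)\<close>, agree
  at \<open>n = 0\<close> and vanish for \<open>i \<ge> m\<close>. Such a solution is unique for all integers \<open>n\<close>: forwards
  in \<open>n\<close> directly, backwards by downward induction on \<open>i\<close>.\<close>

lemma gbinom_0_right: "gbinom n 0 = 1"
  by (simp add: gbinom_def)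

lemma gbinom_0_Suc: "gbinom 0 (Suc k) = 0"
proof -
  have prod_0: "(\<Prod>i<Suc k. (0::int) - int i) = 0"
    by (rule prod_zero) auto
  show ?thesis
    unfolding gbinom_def prod_0 by simp
qed

lemma gbinom_Suc_Suc: "gbinom (n + 1) (Suc k) = gbinom n k + gbinom n (Suc k)"
  using gbinomial_int_Suc_Suc[of n k]
  by (simp only: gbinom_def gbinomial_prod_rev atLeast0LessThan of_nat_fact)

lemma zsmul_0_left [simp]: "zsmul 0 x = 0"
  by (simp add: zsmul_def)

lemma zsmul_0_right [simp]: "zsmul n (0::'a::ab_group_add) = 0"
  by (simp add: zsmul_def)

lemma zsmul_1_left [simp]: "zsmul 1 x = x"
  by (simp add: zsmul_def)

lemma zsmul_add_1: "zsmul (n + 1) x = zsmul n x + (x::'a::ab_group_add)"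
proof (cases "0 \<le> n")
  case True
  then have "nat (n + 1) = Suc (nat n)"
    by simp
  with True show ?thesis
    by (simp add: zsmul_def)
next
  case False
  then have "nat (- n) = Suc (nat (- (n + 1)))"
    by simp
  with False show ?thesis
    by (cases "n = -1") (simp_all add: zsmul_def)
qed

lemma zsmul_add_left: "zsmul (p + q) x = zsmul p x + zsmul q (x::'a::ab_group_add)"
proof (induction q rule: int_induct[where k = 0])
  case base
  then show ?case by simp
next
  case (step1 q)
  then show ?case
    using zsmul_add_1[of "p + q" x] zsmul_add_1[of q x] by (simp add: add.assoc)
next
  case (step2 q)
  then show ?case
    using zsmul_add_1[of "p + (q - 1)" x] zsmul_add_1[of "q - 1" x] by (simp add: algebra_simps)
qed

lemma sum_gbinom_pascal:
  fixes b :: "nat \<Rightarrow> 'a::ab_group_add"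
  assumes "b (m + i) = 0"
  shows "(\<Sum>k<m. zsmul (gbinom (n + 1) k) (b (k + i)))
       = (\<Sum>k<m. zsmul (gbinom n k) (b (k + Suc i))) + (\<Sum>k<m. zsmul (gbinom n k) (b (k + i)))"
proof -
  define tail where "tail = (\<Sum>k<m. zsmul (gbinom n (Suc k)) (b (Suc k + i)))"
  have "(\<Sum>k<m. zsmul (gbinom (n + 1) k) (b (k + i)))
      = (\<Sum>k<Suc m. zsmul (gbinom (n + 1) k) (b (k + i)))"
    using assms by (simp add: add.commute)
  also have "\<dots> = b i + (\<Sum>k<m. zsmul (gbinom n k) (b (k + Suc i))) + tail"
    unfolding sum.lessThan_Suc_shift tail_def
    by (simp add: gbinom_0_right gbinom_Suc_Suc zsmul_add_left sum.distrib add.assoc)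
  finally have lhs: "(\<Sum>k<m. zsmul (gbinom (n + 1) k) (b (k + i)))
      = b i + (\<Sum>k<m. zsmul (gbinom n k) (b (k + Suc i))) + tail" .
  have "(\<Sum>k<m. zsmul (gbinom n k) (b (k + i))) = (\<Sum>k<Suc m. zsmul (gbinom n k) (b (k + i)))"
    using assms by (simp add: add.commute)
  also have "\<dots> = b i + tail"
    unfolding sum.lessThan_Suc_shift tail_def by (simp add: gbinom_0_right)
  finally show ?thesis
    using lhs by (simp add: algebra_simps)
qed

lemma add_span_diff: "x \<in> add_span S \<Longrightarrow> y \<in> add_span S \<Longrightarrow> x - y \<in> add_span S"
  unfolding add_span_def by blast

lemma zero_in_add_span: "0 \<in> add_span S"
  unfolding add_span_def by blast

lemma add_span_add: "x \<in> add_span S \<Longrightarrow> y \<in> add_span S \<Longrightarrow> x + y \<in> add_span S"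
  using add_span_diff[OF _ add_span_diff[OF zero_in_add_span], of x S y] by simp

lemma bstar_in_star_set: "l \<in> L \<Longrightarrow> r \<in> M \<Longrightarrow> bstar mul l r \<in> star_set mul L M"
  unfolding star_set_def add_span_def by blast

definition blambda :: "('a::ab_group_add \<Rightarrow> 'a \<Rightarrow> 'a) \<Rightarrow> 'a \<Rightarrow> 'a \<Rightarrow> 'a" where
  "blambda mul x y = - x + mul x y"

lemma blambda_eq_bstar_add: "blambda mul x y = bstar mul x y + y"
  by (simp add: blambda_def bstar_def)

context
  fixes mul :: "'a::ab_group_add \<Rightarrow> 'a \<Rightarrow> 'a"
  assumes brace: "left_brace mul"
begin

lemma brace_mul_0_right: "mul x 0 = x"
  using brace unfolding left_brace_def
  by (metis add_0 add_diff_cancel_left' diff_add_cancel)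

lemma brace_group_0:
  "\<forall>x. mul 0 x = x \<and> mul x 0 = x" "\<forall>x. \<exists>y. mul x y = 0 \<and> mul y x = 0"
proof -
  obtain e where e: "\<forall>x. mul e x = x \<and> mul x e = x" "\<forall>x. \<exists>y. mul x y = e \<and> mul y x = e"
    using brace unfolding left_brace_def is_group_op_def by blast
  have "e = 0"
    using e(1) brace_mul_0_right[of e] by metis
  with e show "\<forall>x. mul 0 x = x \<and> mul x 0 = x" "\<forall>x. \<exists>y. mul x y = 0 \<and> mul y x = 0"
    by simp_all
qed

lemma blambda_0_left: "blambda mul 0 y = y"
  using brace_group_0(1) by (simp add: blambda_def)

lemma blambda_add: "blambda mul x (y + z) = blambda mul x y + blambda mul x z"
  using brace unfolding left_brace_def blambda_def by (simp add: algebra_simps)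

lemma blambda_0_right: "blambda mul x 0 = 0"
  using blambda_add[of x 0 0] by simp

lemma blambda_minus: "blambda mul x (- y) = - blambda mul x y"
  using blambda_add[of x y "- y"] by (simp add: blambda_0_right eq_neg_iff_add_eq_0 add.commute)

lemma blambda_mul: "blambda mul (mul x y) z = blambda mul x (blambda mul y z)"
proof -
  have "blambda mul x (blambda mul y z) = blambda mul x (- y) + blambda mul x (mul y z)"
    unfolding blambda_def[of mul y z] by (rule blambda_add)
  also have "\<dots> = - mul x y + mul (mul x y) z"
    using brace unfolding left_brace_def is_group_op_def
    by (simp only: blambda_minus) (simp add: blambda_def algebra_simps)
  finally show ?thesis
    by (simp add: blambda_def)
qed

lemma add_eq_mul_blambda:
  obtains w where "mul x w = x + y" and "w - y \<in> rser mul 1"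
proof -
  obtain x' where x': "mul x x' = 0"
    using brace_group_0(2) by blast
  define w where "w = blambda mul x' y"
  have "blambda mul x w = y"
    unfolding w_def blambda_mul[symmetric] x' blambda_0_left ..
  then have "mul x w = x + y"
    by (simp add: blambda_def algebra_simps)
  moreover have "w - y \<in> rser mul 1"
    by (simp add: w_def blambda_eq_bstar_add bstar_in_star_set)
  ultimately show ?thesis ..
qed

context
  assumes rser_2: "rser mul 2 = {0}"
begin

lemma blambda_rser_1: "l \<in> rser mul 1 \<Longrightarrow> blambda mul l y = y"
  using bstar_in_star_set[of l "rser mul 1" y UNIV mul] rser_2
  by (simp add: blambda_eq_bstar_add numeral_2_eq_2)

lemma blambda_add_rser_1:
  assumes "l \<in> rser mul 1"
  shows "blambda mul (x + l) y = blambda mul x y"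
proof -
  obtain w where w: "mul x w = x + l" "w - l \<in> rser mul 1"
    by (rule add_eq_mul_blambda)
  have "w \<in> rser mul 1"
    using add_span_add[of "w - l" _ l] w(2) assms by (simp add: star_set_def)
  then show ?thesis
    using blambda_mul[of x w y] by (simp add: w(1) blambda_rser_1)
qed

lemma blambda_add_left: "blambda mul (x + y) z = blambda mul x (blambda mul y z)"
proof -
  obtain w where w: "mul x w = x + y" "w - y \<in> rser mul 1"
    by (rule add_eq_mul_blambda)
  have "blambda mul w z = blambda mul y z"
    using blambda_add_rser_1[OF w(2), of y z] by simp
  then show ?thesis
    using blambda_mul[of x w z] by (simp add: w(1))
qed

end

end

lemma aseq_Suc: "aseq mul a (Suc (Suc i)) = bstar mul a (aseq mul a (Suc i))"
  by (simp add: aseq_def)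

lemma aseq_in_lser: "aseq mul a (Suc i) \<in> lser mul i"
proof (induction i)
  case 0
  then show ?case by simp
next
  case (Suc i)
  then show ?case
    by (simp add: aseq_Suc bstar_in_star_set)
qed

lemma aseq_eq_0:
  assumes "left_brace mul" and "lser mul m = {0}" and "m < j"
  shows "aseq mul a j = 0"
proof -
  from \<open>m < j\<close> obtain i where "j = Suc (m + i)"
    using less_imp_Suc_add by blast
  moreover have "aseq mul a (Suc (m + i)) = 0"
  proof (induction i)
    case 0
    then show ?case
      using aseq_in_lser[of mul a m] assms(2) by simp
  next
    case (Suc i)
    then show ?case
      using blambda_0_right[OF assms(1)] by (simp add: aseq_Suc blambda_eq_bstar_add)
  qed
  ultimately show ?thesis by simp
qed

lemma pascal_recurrence_eq_0:
  fixes d :: "int \<Rightarrow> nat \<Rightarrow> 'a::ab_group_add"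
  assumes step: "\<And>n i. d (n + 1) i = d n (Suc i) + d n i"
    and init: "\<And>i. d 0 i = 0"
    and vanish: "\<And>n i. m \<le> i \<Longrightarrow> d n i = 0"
  shows "d n i = 0"
proof (induction n arbitrary: i rule: int_induct[where k = 0])
  case base
  then show ?case by (rule init)
next
  case (step1 n)
  then show ?case by (simp add: step)
next
  case (step2 n)
  show ?case
  proof (cases "i \<le> m")
    case True
    then show ?thesis
    proof (induction i rule: inc_induct)
      case base
      then show ?case by (rule vanish) simp
    next
      case (step i)
      then show ?case
        using assms(1)[of "n - 1" i] step2(2)[of i] by simp
    qed
  next
    case False
    then show ?thesis by (simp add: vanish)
  qed
qed

lemma blambda_zsmul_eq_sum_gbinom:
  fixes b :: "nat \<Rightarrow> 'a::ab_group_add"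
  assumes brace: "left_brace mul" and rser_2: "rser mul 2 = {0}"
    and b_Suc: "\<And>i. b (Suc i) = bstar mul a (b i)"
    and b_vanish: "\<And>i. m \<le> i \<Longrightarrow> b i = 0"
  shows "blambda mul (zsmul n a) (b i) = (\<Sum>k<m. zsmul (gbinom n k) (b (k + i)))"
proof -
  define d where "d n i = blambda mul (zsmul n a) (b i) - (\<Sum>k<m. zsmul (gbinom n k) (b (k + i)))"
    for n i
  have "d n i = 0"
  proof (rule pascal_recurrence_eq_0[where m = m])
    fix n i
    have "blambda mul (zsmul (n + 1) a) (b i)
        = blambda mul (zsmul n a) (b (Suc i)) + blambda mul (zsmul n a) (b i)"
      by (simp add: zsmul_add_1 blambda_add_left[OF brace rser_2] blambda_eq_bstar_add[of mul a]
          b_Suc blambda_add[OF brace])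
    then show "d (n + 1) i = d n (Suc i) + d n i"
      using sum_gbinom_pascal[of b m i n] b_vanish[of "m + i"] unfolding d_def
      by (simp add: algebra_simps)
  next
    fix i
    have "(\<Sum>k<m. zsmul (gbinom 0 k) (b (k + i))) = b i"
    proof (cases m)
      case 0
      then show ?thesis by (simp add: b_vanish)
    next
      case (Suc m')
      then show ?thesis
        unfolding Suc sum.lessThan_Suc_shift by (simp add: gbinom_0_right gbinom_0_Suc)
    qed
    then show "d 0 i = 0"
      by (simp add: d_def blambda_0_left[OF brace])
  next
    fix n i
    assume "m \<le> i"
    then show "d n i = 0"
      by (simp add: d_def b_vanish blambda_0_right[OF brace])
  qed
  then show ?thesis
    by (simp add: d_def)
qed

theorem mainTheorem11:
  fixes mul :: "'a::ab_group_add \<Rightarrow> 'a \<Rightarrow> 'a" and m :: nat and a :: 'a and n :: int and j :: nat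
  assumes "m \<ge> 2"
    and "left_brace mul"
    and "rser mul 2 = {0}"
    and "lser mul m = {0}"
    and "1 \<le> j" and "j \<le> m"
  shows "bstar mul (zsmul n a) (aseq mul a j)
           = (\<Sum>k = 1..m - j. zsmul (gbinom n k) (aseq mul a (k + j)))"
proof -
  define b where "b i = aseq mul a (Suc i)" for i
  define g where "g k = zsmul (gbinom n k) (aseq mul a (k + j))" for k
  have b_vanish: "b i = 0" if "m \<le> i" for i
    unfolding b_def using aseq_eq_0[OF assms(2,4)] that by simp
  obtain i where j: "j = Suc i"
    using assms(5) Suc_le_D by auto
  have "bstar mul (zsmul n a) (aseq mul a j) = (\<Sum>k<m. g k) - g 0"
    using blambda_zsmul_eq_sum_gbinom[OF assms(2,3), of b a m n i] aseq_Suc[of mul a] b_vanish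
    by (simp add: b_def g_def j blambda_eq_bstar_add gbinom_0_right eq_diff_eq)
  also have "(\<Sum>k<m. g k) = (\<Sum>k<Suc (m - j). g k)"
    using assms(6) aseq_eq_0[OF assms(2,4)]
    by (intro sum.mono_neutral_right) (auto simp: g_def j)
  also have "\<dots> - g 0 = (\<Sum>k = 1..m - j. g k)"
    by (simp only: sum.lessThan_Suc_shift sum.atLeast1_atMost_eq One_nat_def) simp
  finally show ?thesis
    by (simp add: g_def)
qed

end
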